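(* Let $0<s<\tfrac12$. For every $\Phi\in\mathscr{C}_c^\infty(\mathbb{R}^{2n})$ the function $(x,y)\mapsto\frac{\Phi(x,y)-\Phi(x,x)}{|x-y|^{n+2s}}$ belongs to $L^1(\mathbb{R}^{2n})$, and the linear functional $\langle\!\langle S,\Phi\rangle\!\rangle=\iint_{\mathbb{R}^{2n}}\frac{\Phi(x,y)-\Phi(x,x)}{|x-y|^{n+2s}}\,dx\,dy$ defines a distribution in $\mathscr{D}'(\mathbb{R}^{2n})$.
   Context: $\mathscr{D}'(\mathbb{R}^{2n})$ is the space of distributions, i.e. linear functionals on $\mathscr{C}_c^\infty(\mathbb{R}^{2n})$ continuous for its usual inductive limit topology. *)

theory Defs
  imports "HOL-Analysis.Analysis"
begin

fun ddiff :: "('a::real_normed_vector \<Rightarrow> real) \<Rightarrow> 'a list \<Rightarrow> 'a \<Rightarrow> real" where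
  "ddiff f [] = f"
| "ddiff f (v # vs) = (\<lambda>x. frechet_derivative (ddiff f vs) (at x) v)"

definition smooth :: "('a::real_normed_vector \<Rightarrow> real) \<Rightarrow> bool" where
  "smooth f \<longleftrightarrow> (\<forall>vs. \<forall>x. ddiff f vs differentiable (at x))"

definition fsupport :: "('a::topological_space \<Rightarrow> real) \<Rightarrow> 'a set" where
  "fsupport f = closure {x. f x \<noteq> 0}"

definition test_function :: "('a::euclidean_space \<Rightarrow> real) \<Rightarrow> bool" where
  "test_function f \<longleftrightarrow> smooth f \<and> compact (fsupport f)"

definition Cm_seminorm :: "nat \<Rightarrow> ('a::euclidean_space \<Rightarrow> real) \<Rightarrow> real" where
  "Cm_seminorm m f =
     (\<Sum>vs\<in>{vs. set vs \<subseteq> Basis \<and> length vs \<le> m}. (SUP x. \<bar>ddiff f vs x\<bar>))"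

text \<open>Distributions: linear functionals on C_c^infinity continuous for the inductive limit
  topology, i.e. (standard characterization, Hoermander Def. 2.1.1) for every compact K there
  are C, m with |T phi| \<le> C * (C^m seminorm of phi) for all test functions phi supported in K.\<close>
definition is_distribution :: "(('a::euclidean_space \<Rightarrow> real) \<Rightarrow> real) \<Rightarrow> bool" where
  "is_distribution T \<longleftrightarrow>
     (\<forall>f g a b. test_function f \<longrightarrow> test_function g \<longrightarrow>
        T (\<lambda>x. a * f x + b * g x) = a * T f + b * T g) \<and>
     (\<forall>K. compact K \<longrightarrow> (\<exists>C m. \<forall>\<phi>. test_function \<phi> \<longrightarrow> fsupport \<phi> \<subseteq> K \<longrightarrow>
        \<bar>T \<phi>\<bar> \<le> C * Cm_seminorm m \<phi>))"

end

theory Submission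
  imports Defs
begin

(* Write n = DIM('a) and c = n + 2s, so that n < c < n + 1 precisely because 0 < s < 1/2.
   If the test function Phi is supported in the ball of radius R, the mean value theorem gives
   |Phi(x,y) - Phi(x,x)| <= 2 |Phi|_{C^1} min(|x - y|, 1), and the difference vanishes unless |x| <= R.
   Hence the integrand is dominated by 2 |Phi|_{C^1} 1_{|x| <= R} k(y - x) with
   k(z) = min(|z|, 1) / |z|^c; by Fubini and translation invariance this majorant is integrable as
   soon as k is, and its integral is the constant of the order-1 estimate defining a distribution.
   The kernel k is integrable on R^n because it is dominated almost everywhere by the tensor
   product of the one-variable profile |t|^-a (|t| <= 1), |t|^-b (|t| > 1), where
   a = (c - 1)/n < 1 < b = c/n: the profile decreases in |t|, so every factor at z is at least
   the profile at |z|, and the n-th power of that value is k(z). *)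

definition power_profile :: "real \<Rightarrow> real \<Rightarrow> real \<Rightarrow> real" where
  "power_profile a b t = (if \<bar>t\<bar> \<le> 1 then \<bar>t\<bar> powr -a else \<bar>t\<bar> powr -b)"

lemma power_profile_nonneg: "0 \<le> power_profile a b t"
  by (simp add: power_profile_def)

lemma borel_measurable_power_profile [measurable]: "power_profile a b \<in> borel_measurable borel"
  unfolding power_profile_def by measurable

lemma has_integral_power_profile_from_0:
  assumes "a < 1" "1 < b"
  shows "(power_profile a b has_integral (1 / (1 - a) + 1 / (b - 1))) {0..}"
proof -
  have "((\<lambda>t. t powr -a) has_integral (1 / (1 - a))) {0..1}"
    using has_integral_powr_from_0[of "-a" 1] assms by simp
  then have near: "(power_profile a b has_integral (1 / (1 - a))) {0..1}"
    by (rule has_integral_eq[rotated]) (simp add: power_profile_def)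
  have "((\<lambda>t. t powr -b) has_integral (1 / (b - 1))) {1..}"
    using has_integral_powr_to_inf[of "-b" 1] assms by (simp add: minus_divide_right)
  then have far: "(power_profile a b has_integral (1 / (b - 1))) {1..}"
    by (rule has_integral_eq[rotated]) (auto simp: power_profile_def)
  have "{0..1} \<inter> {1..} = {1::real}" by auto
  then have "(power_profile a b has_integral (1 / (1 - a) + 1 / (b - 1))) ({0..1} \<union> {1..})"
    by (intro has_integral_Un near far) simp
  moreover have "{0..1} \<union> {1..} = {0::real..}" by auto
  ultimately show ?thesis by simp
qed

lemma integrable_power_profile:
  assumes "a < 1" "1 < b"
  shows "integrable lborel (power_profile a b)"
proof -
  define h where "h t = (if t \<in> {0..} then power_profile a b t else 0)" for t
  have [measurable]: "h \<in> borel_measurable borel" unfolding h_def by measurable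
  have h_integral: "(h has_integral (1 / (1 - a) + 1 / (b - 1))) UNIV"
    unfolding h_def by (rule has_integral_restrict_UNIV[THEN iffD2])
      (rule has_integral_power_profile_from_0[OF assms])
  have half: "(\<integral>\<^sup>+t. ennreal (h t) \<partial>lborel) = ennreal (1 / (1 - a) + 1 / (b - 1))"
    by (rule nn_integral_has_integral_lborel[OF _ _ h_integral])
      (auto simp: h_def power_profile_nonneg)
  have "(\<integral>\<^sup>+t. ennreal (h (- t)) \<partial>lborel)
      = (\<integral>\<^sup>+t. ennreal (h t) \<partial>distr lborel borel uminus)"
    by (subst nn_integral_distr) auto
  then have reflected:
    "(\<integral>\<^sup>+t. ennreal (h (- t)) \<partial>lborel) = (\<integral>\<^sup>+t. ennreal (h t) \<partial>lborel)"
    by (simp add: lborel_distr_uminus)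
  have split: "power_profile a b t = h t + h (- t)" for t
    by (auto simp: h_def power_profile_def)
  have "(\<integral>\<^sup>+t. ennreal (power_profile a b t) \<partial>lborel)
      = (\<integral>\<^sup>+t. ennreal (h t) \<partial>lborel) + (\<integral>\<^sup>+t. ennreal (h (- t)) \<partial>lborel)"
    unfolding split by (subst nn_integral_add[symmetric])
      (auto simp: h_def power_profile_nonneg ennreal_plus)
  also have "\<dots> < \<infinity>" unfolding reflected half by simp
  finally show ?thesis
    by (intro integrableI_nonneg) (auto simp: power_profile_nonneg)
qed

lemma power_profile_antimono:
  assumes "0 \<le> a" "0 \<le> b" "t \<noteq> 0" "\<bar>t\<bar> \<le> \<bar>r\<bar>"
  shows "power_profile a b r \<le> power_profile a b t"
proof (cases "\<bar>t\<bar> \<le> 1")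
  case True
  show ?thesis
  proof (cases "\<bar>r\<bar> \<le> 1")
    case True
    then show ?thesis using \<open>\<bar>t\<bar> \<le> 1\<close> assms by (simp add: power_profile_def powr_mono2')
  next
    case False
    then have "\<bar>r\<bar> powr -b \<le> 1" using assms by (simp add: powr_minus_divide ge_one_powr_ge_zero)
    moreover have "1 \<le> \<bar>t\<bar> powr -a" using True assms by (simp add: powr_minus_divide powr_le1)
    ultimately show ?thesis using True False by (simp add: power_profile_def)
  qed
next
  case False
  then show ?thesis using assms by (simp add: power_profile_def powr_mono2')
qed

lemma power_profile_power:
  assumes "0 < r"
  shows "power_profile a b r ^ n = power_profile (a * n) (b * n) r"
  using assms by (simp add: power_profile_def powr_power mult.commute)

lemma min_div_powr_eq_power_profile:
  fixes r p :: real
  assumes "0 \<le> r"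
  shows "min r 1 / r powr p = power_profile (p - 1) p r"
proof (cases "r = 0")
  case False
  then have "0 < r" using assms by simp
  then show ?thesis
    by (auto simp: power_profile_def powr_minus_divide powr_diff min_def)
qed (simp add: power_profile_def)

lemma AE_lborel_inner_Basis_nonzero: "AE z in lborel. \<forall>c\<in>Basis. z \<bullet> c \<noteq> (0::real)"
proof (rule AE_finite_allI[OF finite_Basis])
  fix c :: 'a assume "c \<in> Basis"
  then have "{z::'a. z \<bullet> c = 0} \<in> null_sets lebesgue"
    using negligible_standard_hyperplane negligible_iff_null_sets by blast
  then show "AE z in lborel. z \<bullet> c \<noteq> 0"
    by (auto dest: AE_not_in simp: AE_completion_iff)
qed

lemma integrable_min_norm_div_norm_powr:
  fixes p :: real
  assumes "DIM('a) < p" "p < DIM('a) + 1"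
  shows "integrable lborel (\<lambda>z::'a::euclidean_space. min (norm z) 1 / norm z powr p)"
proof -
  define n where "n = real DIM('a)"
  define a where "a = (p - 1) / n"
  define b where "b = p / n"
  have "1 \<le> n" unfolding n_def using DIM_positive by (simp add: Suc_le_eq)
  moreover have "n < p" "p < n + 1" using assms by (simp_all add: n_def)
  ultimately have ab: "0 \<le> a" "a < 1" "0 \<le> b" "1 < b"
    and an: "a * n = p - 1" and bn: "b * n = p"
    by (auto simp: a_def b_def field_simps)
  let ?f = "\<lambda>z::'a. \<Prod>c\<in>Basis. power_profile a b (z \<bullet> c)"
  have bound: "min (norm z) 1 / norm z powr p \<le> ?f z" if "\<forall>c\<in>Basis. z \<bullet> c \<noteq> 0" for z :: 'a
  proof -
    obtain c :: 'a where "c \<in> Basis" using nonempty_Basis by blast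
    then have "0 < norm z" using that by auto
    then have "min (norm z) 1 / norm z powr p = power_profile a b (norm z) ^ DIM('a)"
      by (simp add: min_div_powr_eq_power_profile power_profile_power an bn flip: n_def)
    also have "\<dots> = (\<Prod>c\<in>(Basis::'a set). power_profile a b (norm z))" by simp
    also have "\<dots> \<le> ?f z"
      using that ab Basis_le_norm
      by (intro prod_mono conjI power_profile_nonneg power_profile_antimono) auto
    finally show ?thesis .
  qed
  have "(\<integral>\<^sup>+z. ennreal (?f z) \<partial>lborel)
      = (\<integral>\<^sup>+z. (\<Prod>c\<in>(Basis::'a set). ennreal (power_profile a b (z \<bullet> c))) \<partial>lborel)"
    by (simp add: prod_ennreal power_profile_nonneg)
  also have "\<dots> = (\<Prod>c\<in>(Basis::'a set). \<integral>\<^sup>+t. power_profile a b t \<partial>lborel)"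
    by (rule nn_integral_lborel_prod) auto
  also have "\<dots> < \<infinity>"
    using integrableD(2)[OF integrable_power_profile[OF ab(2,4)]]
    by (simp add: power_profile_nonneg power_less_top_ennreal top.not_eq_extremum)
  finally have f_integrable: "integrable lborel ?f"
    by (intro integrableI_nonneg) (auto simp: power_profile_nonneg prod_nonneg)
  have dominated: "AE z in lborel. norm (min (norm z) 1 / norm z powr p) \<le> norm (?f z)"
    using AE_lborel_inner_Basis_nonzero
    by eventually_elim (use bound in \<open>auto simp: power_profile_nonneg prod_nonneg\<close>)
  show ?thesis by (rule Bochner_Integration.integrable_bound[OF f_integrable _ dominated]) measurable
qed

lemma nn_integral_lborel_shift:
  fixes f :: "'a::euclidean_space \<Rightarrow> ennreal"
  assumes [measurable]: "f \<in> borel_measurable borel"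
  shows "(\<integral>\<^sup>+y. f (y - x) \<partial>lborel) = (\<integral>\<^sup>+z. f z \<partial>lborel)"
proof -
  have "(\<integral>\<^sup>+y. f (y - x) \<partial>lborel) = (\<integral>\<^sup>+y. f y \<partial>distr lborel borel ((+) (- x)))"
    by (subst nn_integral_distr) auto
  then show ?thesis by (simp add: lborel_distr_plus)
qed

lemma integrable_indicator_fst_mult_diff:
  fixes k :: "'a::euclidean_space \<Rightarrow> real"
  assumes k: "integrable lborel k" and A: "A \<in> sets borel" "emeasure lborel A < \<infinity>"
  shows "integrable lborel (\<lambda>(x, y). indicator A x * k (y - x))"
proof -
  have [measurable]: "k \<in> borel_measurable borel" using k by simp
  let ?g = "\<lambda>(x::'a, y::'a). indicator A x * k (y - x)"
  have g_measurable: "?g \<in> borel_measurable (lborel \<Otimes>\<^sub>M lborel)"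
    using A by measurable
  have "(\<integral>\<^sup>+p. norm (?g p) \<partial>(lborel \<Otimes>\<^sub>M lborel))
      = (\<integral>\<^sup>+x. \<integral>\<^sup>+y. indicator A x * ennreal (norm (k (y - x))) \<partial>lborel \<partial>lborel)"
    using g_measurable
    by (subst lborel.nn_integral_fst[symmetric]) (auto simp: abs_mult indicator_mult_ennreal)
  also have "\<dots> = (\<integral>\<^sup>+x. indicator A x * (\<integral>\<^sup>+z. norm (k z) \<partial>lborel) \<partial>lborel)"
    by (simp add: nn_integral_cmult nn_integral_lborel_shift[where f = "\<lambda>z. ennreal \<bar>k z\<bar>"])
  also have "\<dots> = (\<integral>\<^sup>+z. norm (k z) \<partial>lborel) * emeasure lborel A"
    using A by (simp add: nn_integral_multc mult.commute)
  also have "\<dots> < \<infinity>"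
    using k A(2) unfolding integrable_iff_bounded by (simp add: ennreal_mult_less_top)
  finally have "integrable (lborel \<Otimes>\<^sub>M lborel) ?g"
    using g_measurable by (intro integrableI_bounded) auto
  then show ?thesis by (simp add: lborel_prod)
qed

lemma test_function_differentiable:
  assumes "test_function f"
  shows "f differentiable (at x)"
proof -
  have "ddiff f [] differentiable (at x)"
    using assms unfolding test_function_def smooth_def by blast
  then show ?thesis by simp
qed

lemma test_function_continuous_on: "test_function f \<Longrightarrow> continuous_on UNIV f"
  by (simp add: differentiable_imp_continuous_on differentiable_on_def test_function_differentiable)

lemma test_function_continuous_on_frechet_derivative:
  assumes "test_function f"
  shows "continuous_on UNIV (\<lambda>x. frechet_derivative f (at x) v)"
proof -
  have "ddiff f [v] differentiable (at x)" for x
    using assms unfolding test_function_def smooth_def by blast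
  then have "(\<lambda>x. frechet_derivative f (at x) v) differentiable (at x)" for x
    by simp
  then show ?thesis
    using continuous_at_imp_continuous_on differentiable_imp_continuous_within by blast
qed

lemma fsupport_zero_outside: "x \<notin> fsupport f \<Longrightarrow> f x = 0"
  using closure_subset[of "{x. f x \<noteq> 0}"] unfolding fsupport_def by blast

lemma frechet_derivative_outside_fsupport:
  fixes f :: "'a::real_normed_vector \<Rightarrow> real"
  assumes "x \<notin> fsupport f"
  shows "frechet_derivative f (at x) v = 0"
proof -
  have "(f has_derivative (\<lambda>_. 0)) (at x)"
  proof (rule has_derivative_transform_within_open[OF has_derivative_const])
    show "open (- fsupport f)" unfolding fsupport_def by (intro open_Compl closed_closure)
    show "x \<in> - fsupport f" using assms by simp
  qed (simp add: fsupport_zero_outside)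
  then have "(\<lambda>_. 0) = frechet_derivative f (at x)" by (rule frechet_derivative_at)
  then show ?thesis by (simp add: fun_eq_iff)
qed

lemma bdd_above_abs_compact_support:
  fixes g :: "'a::topological_space \<Rightarrow> real"
  assumes "continuous_on UNIV g" "compact K" "\<And>x. x \<notin> K \<Longrightarrow> g x = 0"
  shows "bdd_above (range (\<lambda>x. \<bar>g x\<bar>))"
proof -
  have "compact (g ` K)"
    using assms by (intro compact_continuous_image) (auto intro: continuous_on_subset)
  then obtain B where B: "\<forall>y\<in>g ` K. norm y \<le> B"
    using compact_imp_bounded bounded_iff by blast
  have "\<bar>g x\<bar> \<le> max B 0" for x
    using B assms(3)[of x] by (cases "x \<in> K") auto
  then show ?thesis by (rule bdd_aboveI2)
qed

lemma Cm_seminorm_1_eq: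
  fixes f :: "'a::euclidean_space \<Rightarrow> real"
  shows "Cm_seminorm 1 f = (SUP x. \<bar>f x\<bar>) + (\<Sum>b\<in>Basis. SUP x. \<bar>frechet_derivative f (at x) b\<bar>)"
proof -
  have orders: "{vs. set vs \<subseteq> (Basis::'a set) \<and> length vs \<le> 1} = insert [] ((\<lambda>b. [b]) ` Basis)"
  proof (intro set_eqI iffI)
    fix vs :: "'a list" assume "vs \<in> {vs. set vs \<subseteq> Basis \<and> length vs \<le> 1}"
    then show "vs \<in> insert [] ((\<lambda>b. [b]) ` Basis)" by (cases vs) auto
  qed auto
  have "inj_on (\<lambda>b::'a. [b]) Basis" by (simp add: inj_on_def)
  then show ?thesis
    unfolding Cm_seminorm_def orders by (simp add: sum.reindex image_iff)
qed

lemma SUP_abs_nonneg: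
  fixes g :: "'a \<Rightarrow> real"
  assumes "bdd_above (range (\<lambda>x. \<bar>g x\<bar>))"
  shows "0 \<le> (SUP x. \<bar>g x\<bar>)"
  by (rule cSUP_upper2[OF assms UNIV_I]) simp

lemma test_function_bdd_above_abs:
  "test_function f \<Longrightarrow> bdd_above (range (\<lambda>x. \<bar>f x\<bar>))"
  by (rule bdd_above_abs_compact_support[OF test_function_continuous_on _ fsupport_zero_outside])
    (simp_all add: test_function_def)

lemma test_function_bdd_above_abs_derivative:
  "test_function f \<Longrightarrow> bdd_above (range (\<lambda>x. \<bar>frechet_derivative f (at x) v\<bar>))"
  by (rule bdd_above_abs_compact_support[OF test_function_continuous_on_frechet_derivative _
        frechet_derivative_outside_fsupport])
    (simp_all add: test_function_def)

lemma abs_le_Cm_seminorm_1: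
  assumes "test_function f"
  shows "\<bar>f x\<bar> \<le> Cm_seminorm 1 f"
proof -
  have "\<bar>f x\<bar> \<le> (SUP x. \<bar>f x\<bar>)"
    by (rule cSUP_upper[OF UNIV_I test_function_bdd_above_abs[OF assms]])
  moreover have "0 \<le> (SUP x. \<bar>frechet_derivative f (at x) b\<bar>)" for b
    by (rule SUP_abs_nonneg[OF test_function_bdd_above_abs_derivative[OF assms]])
  ultimately show ?thesis
    unfolding Cm_seminorm_1_eq by (smt (verit) sum_nonneg)
qed

lemma onorm_frechet_derivative_le_Cm_seminorm_1:
  assumes "test_function f"
  shows "onorm (frechet_derivative f (at x)) \<le> Cm_seminorm 1 f"
proof -
  define L where "L = (\<Sum>b\<in>Basis. SUP x. \<bar>frechet_derivative f (at x) b\<bar>)"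
  have sup_deriv:
    "\<bar>frechet_derivative f (at x) b\<bar> \<le> (SUP x. \<bar>frechet_derivative f (at x) b\<bar>)" for b
    by (rule cSUP_upper[OF UNIV_I test_function_bdd_above_abs_derivative[OF assms]])
  have "linear (frechet_derivative f (at x))"
    using test_function_differentiable[OF assms] frechet_derivative_works has_derivative_linear
    by blast
  then have "norm (frechet_derivative f (at x) h) \<le> L * norm h" for h
  proof -
    assume linear: "linear (frechet_derivative f (at x))"
    have "frechet_derivative f (at x) h = (\<Sum>b\<in>Basis. (h \<bullet> b) * frechet_derivative f (at x) b)"
      by (subst euclidean_representation[of h, symmetric]) (simp add: linear linear_sum linear_scale)
    also have "\<bar>\<dots>\<bar> \<le> (\<Sum>b\<in>Basis. norm h * (SUP x. \<bar>frechet_derivative f (at x) b\<bar>))"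
      by (intro sum_abs[THEN order_trans] sum_mono)
        (auto simp: abs_mult
          intro!: mult_mono Basis_le_norm sup_deriv order_trans[OF abs_ge_zero sup_deriv])
    finally show ?thesis by (simp add: L_def sum_distrib_left mult.commute)
  qed
  then have "onorm (frechet_derivative f (at x)) \<le> L" by (rule onorm_le)
  moreover have "0 \<le> (SUP x. \<bar>f x\<bar>)"
    by (rule SUP_abs_nonneg[OF test_function_bdd_above_abs[OF assms]])
  ultimately show ?thesis unfolding Cm_seminorm_1_eq L_def by linarith
qed

lemma abs_diff_le_Cm_seminorm_1:
  assumes "test_function f"
  shows "\<bar>f p - f q\<bar> \<le> Cm_seminorm 1 f * norm (p - q)"
proof -
  have "(f has_derivative frechet_derivative f (at x)) (at x)" for x
    using test_function_differentiable[OF assms] frechet_derivative_works by blast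
  from differentiable_bound[OF convex_UNIV this onorm_frechet_derivative_le_Cm_seminorm_1[OF assms]]
  show ?thesis by simp
qed

lemma abs_diff_le_Cm_seminorm_1_min:
  assumes "test_function f"
  shows "\<bar>f p - f q\<bar> \<le> 2 * Cm_seminorm 1 f * min (norm (p - q)) 1"
proof (cases "norm (p - q) \<le> 1")
  case True
  have "0 \<le> Cm_seminorm 1 f" using abs_le_Cm_seminorm_1[OF assms] abs_ge_zero order_trans by blast
  then show ?thesis using True abs_diff_le_Cm_seminorm_1[OF assms, of p q] by (simp add: min_def)
next
  case False
  then show ?thesis
    using abs_le_Cm_seminorm_1[OF assms, of p] abs_le_Cm_seminorm_1[OF assms, of q] by (simp add: min_def)
qed

definition diagonal_quotient :: "real \<Rightarrow> ('a::real_normed_vector \<times> 'a \<Rightarrow> real) \<Rightarrow> 'a \<times> 'a \<Rightarrow> real" where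
  "diagonal_quotient c \<Phi> = (\<lambda>(x, y). (\<Phi> (x, y) - \<Phi> (x, x)) / norm (x - y) powr c)"

lemma diagonal_quotient_linear:
  "diagonal_quotient c (\<lambda>z. a * f z + b * g z)
     = (\<lambda>z. a * diagonal_quotient c f z + b * diagonal_quotient c g z)"
  by (auto simp: diagonal_quotient_def fun_eq_iff field_simps diff_divide_distrib add_divide_distrib)

lemma borel_measurable_diagonal_quotient:
  fixes \<Phi> :: "'a::euclidean_space \<times> 'a \<Rightarrow> real"
  assumes "continuous_on UNIV \<Phi>"
  shows "diagonal_quotient c \<Phi> \<in> borel_measurable lborel"
proof -
  have "continuous_on UNIV (\<lambda>p. \<Phi> p - \<Phi> (fst p, fst p))"
    by (intro continuous_intros continuous_on_compose2[OF assms]) auto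
  then have [measurable]: "(\<lambda>p. \<Phi> p - \<Phi> (fst p, fst p)) \<in> borel_measurable borel"
    by (rule borel_measurable_continuous_onI)
  have [measurable]: "(\<lambda>p::'a \<times> 'a. norm (fst p - snd p)) \<in> borel_measurable borel"
    by (intro borel_measurable_continuous_onI continuous_intros)
  have "diagonal_quotient c \<Phi> = (\<lambda>p. (\<Phi> p - \<Phi> (fst p, fst p)) / norm (fst p - snd p) powr c)"
    by (auto simp: diagonal_quotient_def)
  also have "\<dots> \<in> borel_measurable borel" by measurable
  finally show ?thesis by simp
qed

definition diagonal_majorant :: "real \<Rightarrow> real \<Rightarrow> 'a::real_normed_vector \<times> 'a \<Rightarrow> real" where
  "diagonal_majorant R c = (\<lambda>(x, y). indicator (cball 0 R) x * (min (norm (y - x)) 1 / norm (y - x) powr c))"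

lemma integrable_diagonal_majorant:
  fixes c :: real
  assumes "DIM('a) < c" "c < DIM('a) + 1"
  shows "integrable lborel (diagonal_majorant R c :: 'a::euclidean_space \<times> 'a \<Rightarrow> real)"
  unfolding diagonal_majorant_def
  by (rule integrable_indicator_fst_mult_diff[OF integrable_min_norm_div_norm_powr[OF assms]])
    (use emeasure_lborel_cball_finite in auto)

lemma abs_diagonal_quotient_le:
  fixes \<Phi> :: "'a::euclidean_space \<times> 'a \<Rightarrow> real"
  assumes \<Phi>: "test_function \<Phi>" and supp: "fsupport \<Phi> \<subseteq> cball 0 R"
  shows "\<bar>diagonal_quotient c \<Phi> z\<bar> \<le> 2 * Cm_seminorm 1 \<Phi> * diagonal_majorant R c z"
proof -
  obtain x y where z: "z = (x, y)" by (cases z)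
  show ?thesis
  proof (cases "x \<in> cball 0 R")
    case True
    have "\<bar>\<Phi> (x, y) - \<Phi> (x, x)\<bar> \<le> 2 * Cm_seminorm 1 \<Phi> * min (norm (y - x)) 1"
      using abs_diff_le_Cm_seminorm_1_min[OF \<Phi>, of "(x, y)" "(x, x)"] by (simp add: norm_Pair)
    then show ?thesis
      using z True
      by (simp add: diagonal_quotient_def diagonal_majorant_def abs_divide norm_minus_commute
          divide_right_mono)
  next
    case False
    then have "(x, y) \<notin> fsupport \<Phi>" "(x, x) \<notin> fsupport \<Phi>"
      using supp norm_fst_le[of x y] norm_fst_le[of x x] by auto
    then show ?thesis
      using z False by (simp add: diagonal_quotient_def diagonal_majorant_def fsupport_zero_outside)
  qed
qed

lemma compact_subset_cball_0:
  fixes K :: "'a::real_normed_vector set"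
  assumes "compact K"
  obtains R where "K \<subseteq> cball 0 R"
proof -
  obtain R where "\<And>z. z \<in> K \<Longrightarrow> norm z \<le> R"
    using bounded_normE[OF compact_imp_bounded[OF assms]] by blast
  then have "K \<subseteq> cball 0 R" by auto
  then show ?thesis by (rule that)
qed

lemma integrable_diagonal_quotient:
  fixes c :: real and \<Phi> :: "'a::euclidean_space \<times> 'a \<Rightarrow> real"
  assumes c: "DIM('a) < c" "c < DIM('a) + 1" and \<Phi>: "test_function \<Phi>"
  shows "integrable lborel (diagonal_quotient c \<Phi>)"
proof -
  obtain R where supp: "fsupport \<Phi> \<subseteq> cball 0 R"
    using \<Phi> compact_subset_cball_0 unfolding test_function_def by blast
  show ?thesis
  proof (rule Bochner_Integration.integrable_bound)
    show "integrable lborel (\<lambda>z::'a \<times> 'a. 2 * Cm_seminorm 1 \<Phi> * diagonal_majorant R c z)"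
      by (simp add: integrable_diagonal_majorant[OF c])
    show "diagonal_quotient c \<Phi> \<in> borel_measurable lborel"
      by (rule borel_measurable_diagonal_quotient[OF test_function_continuous_on[OF \<Phi>]])
    show "AE z in lborel.
        norm (diagonal_quotient c \<Phi> z) \<le> norm (2 * Cm_seminorm 1 \<Phi> * diagonal_majorant R c z)"
      unfolding real_norm_def
      by (intro AE_I2 order_trans[OF abs_diagonal_quotient_le[OF \<Phi> supp] abs_ge_self])
  qed
qed

lemma abs_integral_diagonal_quotient_le:
  fixes c :: real and \<Phi> :: "'a::euclidean_space \<times> 'a \<Rightarrow> real"
  assumes c: "DIM('a) < c" "c < DIM('a) + 1"
    and \<Phi>: "test_function \<Phi>" and supp: "fsupport \<Phi> \<subseteq> cball 0 R"
  shows "\<bar>\<integral>z. diagonal_quotient c \<Phi> z \<partial>lborel\<bar>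
           \<le> 2 * (\<integral>z. diagonal_majorant R c (z::'a \<times> 'a) \<partial>lborel) * Cm_seminorm 1 \<Phi>"
proof -
  have "\<bar>\<integral>z. diagonal_quotient c \<Phi> z \<partial>lborel\<bar>
      \<le> (\<integral>z. 2 * Cm_seminorm 1 \<Phi> * diagonal_majorant R c (z::'a \<times> 'a) \<partial>lborel)"
    by (intro integral_abs_bound_integral integrable_diagonal_quotient[OF c \<Phi>] integrable_mult_right
        integrable_diagonal_majorant[OF c] abs_diagonal_quotient_le[OF \<Phi> supp])
  then show ?thesis by (simp add: mult.commute mult.left_commute)
qed

lemma is_distribution_integral_diagonal_quotient:
  fixes c :: real
  assumes c: "DIM('a) < c" "c < DIM('a) + 1"
  shows "is_distribution (\<lambda>\<Phi> :: 'a::euclidean_space \<times> 'a \<Rightarrow> real. \<integral>z. diagonal_quotient c \<Phi> z \<partial>lborel)"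
  unfolding is_distribution_def
proof (intro conjI allI impI)
  fix f g :: "'a \<times> 'a \<Rightarrow> real" and a b :: real
  assume "test_function f" "test_function g"
  then show "(\<integral>z. diagonal_quotient c (\<lambda>x. a * f x + b * g x) z \<partial>lborel)
      = a * (\<integral>z. diagonal_quotient c f z \<partial>lborel) + b * (\<integral>z. diagonal_quotient c g z \<partial>lborel)"
    by (simp add: diagonal_quotient_linear integrable_diagonal_quotient[OF c])
next
  fix K :: "('a \<times> 'a) set"
  assume "compact K"
  then obtain R where "K \<subseteq> cball 0 R"
    by (rule compact_subset_cball_0)
  then show "\<exists>C m. \<forall>\<Phi>. test_function \<Phi> \<longrightarrow> fsupport \<Phi> \<subseteq> K \<longrightarrow>
      \<bar>\<integral>z. diagonal_quotient c \<Phi> z \<partial>lborel\<bar> \<le> C * Cm_seminorm m \<Phi>"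
    using abs_integral_diagonal_quotient_le[OF c] by blast
qed

theorem lemma7p1:
  fixes s :: real
  assumes "0 < s" and "s < 1/2"
  shows "(\<forall>\<Phi> :: ('a::euclidean_space \<times> 'a) \<Rightarrow> real. test_function \<Phi> \<longrightarrow>
            integrable lborel
              (\<lambda>(x, y). (\<Phi> (x, y) - \<Phi> (x, x)) / norm (x - y) powr (real DIM('a) + 2 * s)))
       \<and> is_distribution
           (\<lambda>\<Phi> :: ('a \<times> 'a) \<Rightarrow> real.
              \<integral>z. (\<lambda>(x, y). (\<Phi> (x, y) - \<Phi> (x, x)) / norm (x - y) powr (real DIM('a) + 2 * s)) z \<partial>lborel)"
proof -
  have c: "DIM('a) < DIM('a) + 2 * s" "DIM('a) + 2 * s < DIM('a) + 1"
    using assms by simp_all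
  show ?thesis
    using integrable_diagonal_quotient[OF c] is_distribution_integral_diagonal_quotient[OF c]
    unfolding diagonal_quotient_def by blast
qed

end
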